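(* For each $K\in\mathbb{N}$, there exists a $\Delta\in\mathbb{N}$ such that the following holds. If $G$ is a finite graph with $\delta(x,y)\le K$ for all $x,y\in V(G)$, then either $G$ or its complement $\overline{G}$ has maximum degree at most $\Delta$.
   Context: All graphs are finite and simple. For a vertex $x$ of a graph $G$, $\Gamma(x)$ denotes its neighbourhood. The neighbourhood-distance between two vertices $x,y$ is $\delta(x,y)=|(\Gamma(x)\setminus \{y\})\,\triangle\, (\Gamma(y)\setminus\{x\})|$ (with $\delta(x,x)=0$), where $\triangle$ is symmetric difference. $\overline{G}$ is the complement of $G$. *)

theory Defs
  imports Main
begin

definition simple_graph :: "'a set \<Rightarrow> ('a \<Rightarrow> 'a \<Rightarrow> bool) \<Rightarrow> bool" where
  "simple_graph V E \<longleftrightarrow> finite V \<and> (\<forall>x y. E x y \<longrightarrow> x \<in> V \<and> y \<in> V)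
     \<and> (\<forall>x y. E x y \<longrightarrow> E y x) \<and> (\<forall>x. \<not> E x x)"

definition nbhd :: "'a set \<Rightarrow> ('a \<Rightarrow> 'a \<Rightarrow> bool) \<Rightarrow> 'a \<Rightarrow> 'a set" where
  "nbhd V E x = {y \<in> V. E x y}"

definition compl_edges :: "'a set \<Rightarrow> ('a \<Rightarrow> 'a \<Rightarrow> bool) \<Rightarrow> 'a \<Rightarrow> 'a \<Rightarrow> bool" where
  "compl_edges V E x y \<longleftrightarrow> x \<in> V \<and> y \<in> V \<and> x \<noteq> y \<and> \<not> E x y"

definition nbhd_dist :: "'a set \<Rightarrow> ('a \<Rightarrow> 'a \<Rightarrow> bool) \<Rightarrow> 'a \<Rightarrow> 'a \<Rightarrow> nat" where
  "nbhd_dist V E x y = (if x = y then 0 else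
     card (((nbhd V E x - {y}) - (nbhd V E y - {x})) \<union> ((nbhd V E y - {x}) - (nbhd V E x - {y}))))"

definition max_degree_le :: "'a set \<Rightarrow> ('a \<Rightarrow> 'a \<Rightarrow> bool) \<Rightarrow> nat \<Rightarrow> bool" where
  "max_degree_le V E D \<longleftrightarrow> (\<forall>x\<in>V. card (nbhd V E x) \<le> D)"

end

theory Submission
  imports Defs
begin

text \<open>If some vertex w has more than K non-neighbours, then every neighbour y of w is adjacent to
  at most K non-neighbours of w, while every non-neighbour of w misses at most K neighbours of w.
  Choosing K+1 non-neighbours of w, at most K(K+1) neighbours of w miss one of them, so
  deg w \<le> K^2 + K. Since degrees of any two vertices differ by at most \<delta> + 1 \<le> K + 1, every
  degree is then at most (K+1)^2; otherwise every vertex has at most K non-neighbours.\<close>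

lemma finite_nbhd: "simple_graph V E \<Longrightarrow> finite (nbhd V E x)"
  by (simp add: simple_graph_def nbhd_def)

lemma mem_nbhd_sym: "simple_graph V E \<Longrightarrow> y \<in> nbhd V E x \<Longrightarrow> x \<in> nbhd V E y"
  by (auto simp: simple_graph_def nbhd_def)

lemma nbhd_compl_edges:
  "x \<in> V \<Longrightarrow> nbhd V (compl_edges V E) x = V - insert x (nbhd V E x)"
  by (auto simp: nbhd_def compl_edges_def)

lemma card_nbhd_diff_le_nbhd_dist:
  assumes "simple_graph V E"
  shows "card (nbhd V E x - insert y (nbhd V E y)) \<le> nbhd_dist V E x y"
proof (cases "x = y")
  case False
  have "nbhd V E x - insert y (nbhd V E y) \<subseteq>
      ((nbhd V E x - {y}) - (nbhd V E y - {x})) \<union> ((nbhd V E y - {x}) - (nbhd V E x - {y}))"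
    by auto
  then show ?thesis
    using False finite_nbhd[OF assms] by (simp add: nbhd_dist_def card_mono)
qed (auto simp: nbhd_dist_def)

lemma card_nbhd_le_card_nbhd_add_nbhd_dist:
  assumes G: "simple_graph V E"
  shows "card (nbhd V E x) \<le> card (nbhd V E y) + nbhd_dist V E x y + 1"
proof -
  have "nbhd V E x \<subseteq> (nbhd V E x - insert y (nbhd V E y)) \<union> insert y (nbhd V E y)"
    by blast
  then have "card (nbhd V E x) \<le> card (nbhd V E x - insert y (nbhd V E y)) + card (insert y (nbhd V E y))"
    using finite_nbhd[OF G] by (meson card_Un_le card_mono finite_Diff finite_UnI finite_insert order_trans)
  also have "\<dots> \<le> nbhd_dist V E x y + (card (nbhd V E y) + 1)"
    using card_nbhd_diff_le_nbhd_dist[OF G] finite_nbhd[OF G] by (intro add_mono card_insert_le_m1) auto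
  finally show ?thesis by simp
qed

lemma pigeonhole_common_element:
  assumes "finite Z" "finite N"
    and missing: "\<And>z. z \<in> Z \<Longrightarrow> card (N - A z) \<le> K"
    and big: "card N > card Z * K"
  obtains y where "y \<in> N" "\<And>z. z \<in> Z \<Longrightarrow> y \<in> A z"
proof -
  have "card (\<Union>z\<in>Z. N - A z) \<le> (\<Sum>z\<in>Z. card (N - A z))"
    using \<open>finite Z\<close> by (rule card_UN_le)
  also have "\<dots> \<le> card Z * K"
    using missing sum_mono[of Z "\<lambda>z. card (N - A z)" "\<lambda>_. K"] by simp
  finally have "\<not> N \<subseteq> (\<Union>z\<in>Z. N - A z)"
    using big \<open>finite Z\<close> \<open>finite N\<close> by (meson card_mono finite_UN_I finite_Diff leD order_le_less_trans)
  then show ?thesis using that by blast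
qed

lemma degree_or_codegree_bounded:
  assumes G: "simple_graph V E"
    and dist: "\<forall>x\<in>V. \<forall>y\<in>V. nbhd_dist V E x y \<le> K"
    and x: "x \<in> V"
  shows "card (nbhd V E x) \<le> K * K + K \<or> card (nbhd V (compl_edges V E) x) \<le> K"
proof (rule ccontr)
  define N where "N = nbhd V E x"
  define M where "M = V - insert x N"
  assume "\<not> ?thesis"
  then have big_N: "card N > (K + 1) * K" and big_M: "card M > K"
    by (auto simp: N_def M_def nbhd_compl_edges[OF x] algebra_simps)
  have fin: "finite V" "finite N"
    using G by (auto simp: simple_graph_def N_def nbhd_def)
  have few_in_M: "card (nbhd V E y \<inter> M) \<le> K" if "y \<in> N" for y
  proof -
    have "nbhd V E y \<inter> M \<subseteq> nbhd V E y - insert x (nbhd V E x)"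
      by (auto simp: M_def N_def)
    then have "card (nbhd V E y \<inter> M) \<le> nbhd_dist V E y x"
      using card_nbhd_diff_le_nbhd_dist[OF G] finite_nbhd[OF G] by (meson card_mono finite_Diff le_trans)
    also have "\<dots> \<le> K"
      using dist x that by (auto simp: N_def nbhd_def)
    finally show ?thesis .
  qed
  have few_missed: "card (N - nbhd V E z) \<le> K" if "z \<in> M" for z
  proof -
    have "N - nbhd V E z \<subseteq> nbhd V E x - insert z (nbhd V E z)"
      using that by (auto simp: M_def N_def)
    then have "card (N - nbhd V E z) \<le> nbhd_dist V E x z"
      using card_nbhd_diff_le_nbhd_dist[OF G] finite_nbhd[OF G] by (meson card_mono finite_Diff le_trans)
    also have "\<dots> \<le> K"
      using dist x that by (auto simp: M_def)
    finally show ?thesis .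
  qed
  obtain Z where Z: "Z \<subseteq> M" "card Z = K + 1"
    using obtain_subset_with_card_n[of "K + 1" M] big_M by auto
  have "finite Z"
    using Z fin by (metis M_def finite_Diff finite_subset)
  then obtain y where y: "y \<in> N" and adj: "\<And>z. z \<in> Z \<Longrightarrow> y \<in> nbhd V E z"
    using pigeonhole_common_element[of Z N "nbhd V E" K] few_missed Z big_N fin by auto
  have "Z \<subseteq> nbhd V E y \<inter> M"
    using adj Z mem_nbhd_sym[OF G] by blast
  then have "card Z \<le> card (nbhd V E y \<inter> M)"
    using finite_nbhd[OF G] by (simp add: card_mono)
  with few_in_M[OF y] Z show False by simp
qed

theorem proposition2p1:
  fixes K :: nat
  shows "\<exists>D::nat. \<forall>(V::nat set) E. simple_graph V E \<longrightarrow>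
           (\<forall>x\<in>V. \<forall>y\<in>V. nbhd_dist V E x y \<le> K) \<longrightarrow>
           max_degree_le V E D \<or> max_degree_le V (compl_edges V E) D"
proof (intro exI[of _ "(K + 1)\<^sup>2"] allI impI)
  fix V :: "nat set" and E
  assume G: "simple_graph V E" and dist: "\<forall>x\<in>V. \<forall>y\<in>V. nbhd_dist V E x y \<le> K"
  show "max_degree_le V E ((K + 1)\<^sup>2) \<or> max_degree_le V (compl_edges V E) ((K + 1)\<^sup>2)"
  proof (cases "max_degree_le V (compl_edges V E) K")
    case True
    then show ?thesis
      by (auto simp: max_degree_le_def power2_eq_square intro: le_trans)
  next
    case False
    then obtain w where w: "w \<in> V" "card (nbhd V (compl_edges V E) w) > K"
      by (auto simp: max_degree_le_def not_le)
    then have deg_w: "card (nbhd V E w) \<le> K * K + K"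
      using degree_or_codegree_bounded[OF G dist] by fastforce
    have "card (nbhd V E x) \<le> (K + 1)\<^sup>2" if "x \<in> V" for x
    proof -
      have "nbhd_dist V E x w \<le> K" using dist that w by blast
      then show ?thesis
        using card_nbhd_le_card_nbhd_add_nbhd_dist[OF G, of x w] deg_w
        by (simp add: power2_eq_square)
    qed
    then show ?thesis by (simp add: max_degree_le_def)
  qed
qed

end
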